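(* Let $(V,\omega)$ be a nondegenerate simple CFT type vertex operator algebra generated by $V_1$ and satisfying condition (T). If $\tilde\omega\in\operatorname{Sc}(V,\omega)$ with $\tilde\omega\ne0$ and $\tilde\omega\ne\omega$, then $\dim C_V(C_V(\langle\tilde\omega\rangle))_1>0$ and $\dim C_V(\langle\tilde\omega\rangle)_1>0$.
   Context: Nondegenerate simple CFT type: $V$ simple, $V=\bigoplus_{n\ge0}V_n$, $V_0=\mathbb C\mathbf 1$, and the form $u_1v=\langle u,v\rangle\mathbf 1$ on $V_1$ is nondegenerate. Semi-conformal vector of $(V,\omega)$: conformal vector $\tilde\omega$ of a vertex operator subalgebra $(U,\tilde\omega)$ with $\omega_n|_U=\tilde\omega_n|_U$ for $n\ge0$; $\operatorname{Sc}(V,\omega)$ is the set of these. $C_V(U)=\{v:u_nv=0\ \forall u\in U,n\ge0\}$ (graded, with weight-one part $C_V(U)_1$); $\langle\tilde\omega\rangle$ is the vertex subalgebra generated by $\tilde\omega$. Condition (T): for every $\tilde\omega\in\operatorname{Sc}(V,\omega)$, the natural map $C_V(C_V(\langle\tilde\omega\rangle))\otimes C_V(\langle\tilde\omega\rangle)\to V$, $u\otimes v\mapsto u_{-1}v$, is an isomorphism of vertex operator algebras. *)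

theory Defs
  imports Complex_Main "HOL-Library.Groups_Big_Fun"
begin

text \<open>
  A vertex algebra structure is given by the modes Y u n v (= u_n v,
  n an integer) and the vacuum vac; all structures live on a carrier set A of 'v
  (so that vertex subalgebras with their own conformal vectors are again VOAs).
\<close>

type_synonym 'v modes = "'v \<Rightarrow> int \<Rightarrow> 'v \<Rightarrow> 'v"

definition binom :: "int \<Rightarrow> nat \<Rightarrow> complex" where
  "binom m i = (of_int m :: complex) gchoose i"

text \<open>Borcherds (Jacobi) identity in component form; all sums have finite support.\<close>
definition borcherds :: "(complex \<Rightarrow> 'v::ab_group_add \<Rightarrow> 'v) \<Rightarrow> 'v modes
    \<Rightarrow> 'v \<Rightarrow> 'v \<Rightarrow> 'v \<Rightarrow> int \<Rightarrow> int \<Rightarrow> int \<Rightarrow> bool" where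
  "borcherds sm Y u v w m n p \<longleftrightarrow>
     (Sum_any (\<lambda>i. sm (binom m i) (Y (Y u (p + int i) v) (m + n - int i) w))) =
     (Sum_any (\<lambda>i. sm ((-1) powi (int i) * binom p i) (Y u (m + p - int i) (Y v (n + int i) w))))
   - (Sum_any (\<lambda>i. sm ((-1) powi (p + int i) * binom p i) (Y v (n + p - int i) (Y u (m + int i) w))))"

definition vertex_algebra :: "(complex \<Rightarrow> 'v::ab_group_add \<Rightarrow> 'v) \<Rightarrow> 'v modes \<Rightarrow> 'v
    \<Rightarrow> 'v set \<Rightarrow> bool" where
  "vertex_algebra sm Y vac A \<longleftrightarrow>
     vector_space sm \<and> module.subspace sm A \<and> vac \<in> A \<and>
     (\<forall>u\<in>A. \<forall>v\<in>A. \<forall>n. Y u n v \<in> A) \<and>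
     (\<forall>u\<in>A. \<forall>u'\<in>A. \<forall>v\<in>A. \<forall>n. Y (u + u') n v = Y u n v + Y u' n v) \<and>
     (\<forall>u\<in>A. \<forall>v\<in>A. \<forall>n c. Y (sm c u) n v = sm c (Y u n v)) \<and>
     (\<forall>u\<in>A. \<forall>v\<in>A. \<forall>v'\<in>A. \<forall>n. Y u n (v + v') = Y u n v + Y u n v') \<and>
     (\<forall>u\<in>A. \<forall>v\<in>A. \<forall>n c. Y u n (sm c v) = sm c (Y u n v)) \<and>
     (\<forall>u\<in>A. \<forall>v\<in>A. \<exists>N. \<forall>n\<ge>N. Y u n v = 0) \<and>
     (\<forall>v\<in>A. \<forall>n. Y vac n v = (if n = -1 then v else 0)) \<and>
     (\<forall>u\<in>A. Y u (-1) vac = u \<and> (\<forall>n\<ge>0. Y u n vac = 0)) \<and>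
     (\<forall>u\<in>A. \<forall>v\<in>A. \<forall>w\<in>A. \<forall>m n p. borcherds sm Y u v w m n p)"

definition vertex_subalgebra :: "(complex \<Rightarrow> 'v::ab_group_add \<Rightarrow> 'v) \<Rightarrow> 'v modes \<Rightarrow> 'v
    \<Rightarrow> 'v set \<Rightarrow> 'v set \<Rightarrow> bool" where
  "vertex_subalgebra sm Y vac A B \<longleftrightarrow>
     B \<subseteq> A \<and> module.subspace sm B \<and> vac \<in> B \<and> (\<forall>u\<in>B. \<forall>v\<in>B. \<forall>n. Y u n v \<in> B)"

definition generated :: "(complex \<Rightarrow> 'v::ab_group_add \<Rightarrow> 'v) \<Rightarrow> 'v modes \<Rightarrow> 'v
    \<Rightarrow> 'v set \<Rightarrow> 'v set \<Rightarrow> 'v set" where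
  "generated sm Y vac A S = \<Inter>{B. vertex_subalgebra sm Y vac A B \<and> S \<subseteq> B}"

text \<open>Weight-n subspace A_n of A with respect to L(0) = omega_1.\<close>
definition wt_space :: "(complex \<Rightarrow> 'v::ab_group_add \<Rightarrow> 'v) \<Rightarrow> 'v modes \<Rightarrow> 'v
    \<Rightarrow> 'v set \<Rightarrow> int \<Rightarrow> 'v set" where
  "wt_space sm Y \<omega> A n = {v \<in> A. Y \<omega> 1 v = sm (of_int n) v}"

text \<open>Here L(m) = omega_(m+1).\<close>
definition VOA :: "(complex \<Rightarrow> 'v::ab_group_add \<Rightarrow> 'v) \<Rightarrow> 'v modes \<Rightarrow> 'v \<Rightarrow> 'v
    \<Rightarrow> 'v set \<Rightarrow> bool" where
  "VOA sm Y vac \<omega> A \<longleftrightarrow>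
     vertex_algebra sm Y vac A \<and> \<omega> \<in> A \<and>
     A \<subseteq> module.span sm (\<Union>n. wt_space sm Y \<omega> A n) \<and>
     (\<forall>n. \<exists>B. finite B \<and> wt_space sm Y \<omega> A n \<subseteq> module.span sm B) \<and>
     (\<exists>N. \<forall>n<N. wt_space sm Y \<omega> A n = {0}) \<and>
     Y \<omega> 1 \<omega> = sm 2 \<omega> \<and>
     (\<exists>c::complex. \<forall>m n. \<forall>v\<in>A.
        Y \<omega> (m + 1) (Y \<omega> (n + 1) v) - Y \<omega> (n + 1) (Y \<omega> (m + 1) v) =
        sm (of_int (m - n)) (Y \<omega> (m + n + 1) v)
        + sm (if m + n = 0 then (of_int (m^3 - m) / 12) * c else 0) v) \<and>
     (\<forall>u\<in>A. \<forall>v\<in>A. \<forall>n. Y (Y \<omega> 0 u) n v = sm (- of_int n) (Y u (n - 1) v))"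

definition vertex_ideal :: "(complex \<Rightarrow> 'v::ab_group_add \<Rightarrow> 'v) \<Rightarrow> 'v modes
    \<Rightarrow> 'v set \<Rightarrow> 'v set \<Rightarrow> bool" where
  "vertex_ideal sm Y A I \<longleftrightarrow> I \<subseteq> A \<and> module.subspace sm I \<and>
     (\<forall>u\<in>A. \<forall>v\<in>I. \<forall>n. Y u n v \<in> I \<and> Y v n u \<in> I)"

definition simple_VOA :: "(complex \<Rightarrow> 'v::ab_group_add \<Rightarrow> 'v) \<Rightarrow> 'v modes \<Rightarrow> 'v \<Rightarrow> 'v
    \<Rightarrow> 'v set \<Rightarrow> bool" where
  "simple_VOA sm Y vac \<omega> A \<longleftrightarrow> VOA sm Y vac \<omega> A \<and> A \<noteq> {0} \<and>
     (\<forall>I. vertex_ideal sm Y A I \<longrightarrow> I = {0} \<or> I = A)"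

text \<open>Nondegenerate simple CFT type: V = direct sum of V_n, n \<ge> 0, V_0 = C vac,
  and the form on V_1 given by u_1 v = <u,v> vac is nondegenerate.\<close>
definition nondeg_simple_CFT :: "(complex \<Rightarrow> 'v::ab_group_add \<Rightarrow> 'v) \<Rightarrow> 'v modes \<Rightarrow> 'v
    \<Rightarrow> 'v \<Rightarrow> 'v set \<Rightarrow> bool" where
  "nondeg_simple_CFT sm Y vac \<omega> V \<longleftrightarrow> simple_VOA sm Y vac \<omega> V \<and>
     (\<forall>n<0. wt_space sm Y \<omega> V n = {0}) \<and>
     wt_space sm Y \<omega> V 0 = module.span sm {vac} \<and>
     (\<forall>u\<in>wt_space sm Y \<omega> V 1. (\<forall>v\<in>wt_space sm Y \<omega> V 1. Y u 1 v = 0) \<longrightarrow> u = 0)"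

definition commutant :: "'v::zero modes \<Rightarrow> 'v set \<Rightarrow> 'v set \<Rightarrow> 'v set" where
  "commutant Y A U = {v \<in> A. \<forall>u\<in>U. \<forall>n\<ge>0. Y u n v = 0}"

definition semi_conformal :: "(complex \<Rightarrow> 'v::ab_group_add \<Rightarrow> 'v) \<Rightarrow> 'v modes \<Rightarrow> 'v
    \<Rightarrow> 'v \<Rightarrow> 'v set \<Rightarrow> 'v set" where
  "semi_conformal sm Y vac \<omega> V = {\<omega>'. \<exists>U. vertex_subalgebra sm Y vac V U \<and>
      VOA sm Y vac \<omega>' U \<and> (\<forall>n\<ge>0. \<forall>u\<in>U. Y \<omega> n u = Y \<omega>' n u)}"

text \<open>The natural map C \<otimes> D \<rightarrow> A, u \<otimes> v \<mapsto> u_(-1) v, is an isomorphism of VOAs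
  (C, omega1) \<otimes> (D, omega2) \<cong> (A, omega), for some conformal vectors omega1, omega2.
  The algebraic tensor product is written out: the linear map is injective (for
  linearly independent u_i in C, sum u_i_(-1) v_i = 0 forces all v_i = 0), surjective,
  it preserves all products (the tensor product VOA has
  (a\<otimes>b)_n (a'\<otimes>b') = sum_i a_i a' \<otimes> b_(n-1-i) b'), and it maps the conformal vector
  omega1 \<otimes> vac + vac \<otimes> omega2 to omega (the vacuum goes to vac automatically).\<close>
definition tensor_iso :: "(complex \<Rightarrow> 'v::ab_group_add \<Rightarrow> 'v) \<Rightarrow> 'v modes \<Rightarrow> 'v
    \<Rightarrow> 'v \<Rightarrow> 'v set \<Rightarrow> 'v set \<Rightarrow> 'v set \<Rightarrow> bool" where
  "tensor_iso sm Y vac \<omega> A C D \<longleftrightarrow>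
     (\<exists>\<omega>1 \<omega>2. VOA sm Y vac \<omega>1 C \<and> VOA sm Y vac \<omega>2 D \<and>
        Y \<omega>1 (-1) vac + Y vac (-1) \<omega>2 = \<omega>) \<and>
     (\<forall>I::nat set. \<forall>f g. finite I \<longrightarrow> f ` I \<subseteq> C \<longrightarrow> g ` I \<subseteq> D \<longrightarrow> inj_on f I \<longrightarrow>
        \<not> module.dependent sm (f ` I) \<longrightarrow> (\<Sum>i\<in>I. Y (f i) (-1) (g i)) = 0 \<longrightarrow>
        (\<forall>i\<in>I. g i = 0)) \<and>
     A \<subseteq> module.span sm {Y u (-1) v | u v. u \<in> C \<and> v \<in> D} \<and>
     (\<forall>a\<in>C. \<forall>b\<in>D. \<forall>a'\<in>C. \<forall>b'\<in>D. \<forall>n.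
        Y (Y a (-1) b) n (Y a' (-1) b') = (Sum_any (\<lambda>i. Y (Y a i a') (-1) (Y b (n - 1 - i) b'))))"

definition condition_T :: "(complex \<Rightarrow> 'v::ab_group_add \<Rightarrow> 'v) \<Rightarrow> 'v modes \<Rightarrow> 'v
    \<Rightarrow> 'v \<Rightarrow> 'v set \<Rightarrow> bool" where
  "condition_T sm Y vac \<omega> V \<longleftrightarrow>
     (\<forall>\<omega>' \<in> semi_conformal sm Y vac \<omega> V.
        tensor_iso sm Y vac \<omega> V
          (commutant Y V (commutant Y V (generated sm Y vac V {\<omega>'})))
          (commutant Y V (generated sm Y vac V {\<omega>'})))"

end

theory Submission
  imports Defs
begin

text \<open>
  Condition (T) for \<open>\<langle>\<omega>'\<rangle>\<close> presents \<open>V\<close> as \<open>U \<otimes> D\<close> with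
  \<open>D = C\<^sub>V(\<langle>\<omega>'\<rangle>)\<close>, \<open>U = C\<^sub>V(D)\<close> and \<open>\<omega> = \<omega>\<^sub>1 \<otimes> \<one> + \<one> \<otimes> \<omega>\<^sub>2\<close>, so the
  \<open>L(0)\<close>-grading of \<open>V\<close> is the sum of the gradings of the two factors. As \<open>V\<close> is of
  CFT type, this gives \<open>V\<^sub>1 = U\<^sub>1 + D\<^sub>1\<close>. If \<open>U\<^sub>1 = 0\<close>, then \<open>V\<^sub>1 \<subseteq> D\<close>, hence
  \<open>V = D\<close> since \<open>V\<^sub>1\<close> generates \<open>V\<close>; but \<open>\<omega>'\<close> commutes with \<open>D\<close>, while
  \<open>\<omega>'\<^sub>1\<omega>' = 2\<omega>' \<noteq> 0\<close>. If \<open>D\<^sub>1 = 0\<close>, then likewise \<open>V = U\<close>. Skew symmetry shows that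
  \<open>\<omega> - \<omega>'\<close> lies in \<open>D\<close>, so it commutes with itself, while
  \<open>(\<omega> - \<omega>')\<^sub>1(\<omega> - \<omega>') = 2(\<omega> - \<omega>') \<noteq> 0\<close>.
\<close>

lemma Sum_any_single:
  assumes "\<And>i. i \<noteq> j \<Longrightarrow> f i = (0::'a::comm_monoid_add)"
  shows "Sum_any f = f j"
proof -
  have "f = (\<lambda>i. if i = j then f i else 0)"
    using assms by auto
  then show ?thesis
    by (metis Sum_any.delta)
qed

lemma generated_base: "S \<subseteq> generated sm Y vac V S"
  by (auto simp: generated_def)

locale vertex_alg =
  fixes sm :: "complex \<Rightarrow> 'v::ab_group_add \<Rightarrow> 'v" and Y :: "'v modes" and vac :: 'v
    and V :: "'v set"
  assumes vertex_algebra: "vertex_algebra sm Y vac V"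
begin

sublocale vector_space sm
  using vertex_algebra by (simp add: vertex_algebra_def)

lemma subspace: "subspace V"
  using vertex_algebra by (simp add: vertex_algebra_def)

lemma vac_mem: "vac \<in> V"
  using vertex_algebra by (simp add: vertex_algebra_def)

lemma mode_closed: "u \<in> V \<Longrightarrow> v \<in> V \<Longrightarrow> Y u n v \<in> V"
  using vertex_algebra by (simp add: vertex_algebra_def)

lemma mode_add_left: "u \<in> V \<Longrightarrow> u' \<in> V \<Longrightarrow> v \<in> V \<Longrightarrow> Y (u + u') n v = Y u n v + Y u' n v"
  using vertex_algebra by (simp add: vertex_algebra_def)

lemma mode_add_right: "u \<in> V \<Longrightarrow> v \<in> V \<Longrightarrow> v' \<in> V \<Longrightarrow> Y u n (v + v') = Y u n v + Y u n v'"
  using vertex_algebra by (simp add: vertex_algebra_def)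

lemma mode_scale_left: "u \<in> V \<Longrightarrow> v \<in> V \<Longrightarrow> Y (sm c u) n v = sm c (Y u n v)"
  using vertex_algebra by (simp add: vertex_algebra_def)

lemma mode_scale_right: "u \<in> V \<Longrightarrow> v \<in> V \<Longrightarrow> Y u n (sm c v) = sm c (Y u n v)"
  using vertex_algebra by (simp add: vertex_algebra_def)

lemma vac_mode: "v \<in> V \<Longrightarrow> Y vac n v = (if n = -1 then v else 0)"
  using vertex_algebra by (simp add: vertex_algebra_def)

lemma creation: "u \<in> V \<Longrightarrow> Y u (-1) vac = u"
  using vertex_algebra by (simp add: vertex_algebra_def)

lemma creation_nonneg: "u \<in> V \<Longrightarrow> n \<ge> 0 \<Longrightarrow> Y u n vac = 0"
  using vertex_algebra by (simp add: vertex_algebra_def)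

lemma borcherds_identity: "u \<in> V \<Longrightarrow> v \<in> V \<Longrightarrow> w \<in> V \<Longrightarrow> borcherds sm Y u v w m n p"
  using vertex_algebra by (simp add: vertex_algebra_def)

lemma zero_mem: "0 \<in> V"
  using subspace by (simp add: subspace_def)

lemma add_mem: "x \<in> V \<Longrightarrow> y \<in> V \<Longrightarrow> x + y \<in> V"
  using subspace by (simp add: subspace_def)

lemma scale_mem: "x \<in> V \<Longrightarrow> sm c x \<in> V"
  using subspace by (simp add: subspace_def)

lemma diff_mem: "x \<in> V \<Longrightarrow> y \<in> V \<Longrightarrow> x - y \<in> V"
  using subspace subspace_diff by blast

lemma mode_zero_right: "u \<in> V \<Longrightarrow> Y u n 0 = 0"
  using mode_add_right[of u 0 0 n] zero_mem by simp

lemma mode_zero_left: "v \<in> V \<Longrightarrow> Y 0 n v = 0"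
  using mode_add_left[of 0 0 v n] zero_mem by simp

lemma mode_diff_left: "u \<in> V \<Longrightarrow> u' \<in> V \<Longrightarrow> v \<in> V \<Longrightarrow> Y (u - u') n v = Y u n v - Y u' n v"
  using mode_add_left[of "u - u'" u' v n] diff_mem by (simp add: eq_diff_eq)

lemma mode_diff_right: "u \<in> V \<Longrightarrow> v \<in> V \<Longrightarrow> v' \<in> V \<Longrightarrow> Y u n (v - v') = Y u n v - Y u n v'"
  using mode_add_right[of u "v - v'" v' n] diff_mem by (simp add: eq_diff_eq)

lemma vertex_subalgebra_of_vertex_algebra:
  assumes "vertex_algebra sm Y vac X" "X \<subseteq> V"
  shows "vertex_subalgebra sm Y vac V X"
  using assms by (simp add: vertex_subalgebra_def vertex_algebra_def)

lemma generated_subset: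
  assumes "vertex_algebra sm Y vac X" "X \<subseteq> V" "S \<subseteq> X"
  shows "generated sm Y vac V S \<subseteq> X"
  using vertex_subalgebra_of_vertex_algebra[OF assms(1,2)] assms(3)
  by (auto simp: generated_def)

text \<open>Borcherds' identity with \<open>m = -1\<close>, \<open>n = 0\<close>, \<open>w = vac\<close>.\<close>
lemma skew_symmetry:
  assumes "u \<in> V" "v \<in> V"
  shows "Sum_any (\<lambda>i. sm (binom (-1) i) (Y (Y u (p + int i) v) (-1 - int i) vac))
    = - sm ((-1) powi p) (Y v p u)"
proof -
  have B: "borcherds sm Y u v vac (-1) 0 p"
    using borcherds_identity assms vac_mem by blast
  have R1: "(\<lambda>i::nat. sm ((-1) powi (int i) * binom p i) (Y u (-1 + p - int i) (Y v (0 + int i) vac)))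
      = (\<lambda>i. 0)"
    using creation_nonneg[OF assms(2)] mode_zero_right[OF assms(1)] by auto
  have "Sum_any (\<lambda>i::nat. sm ((-1) powi (p + int i) * binom p i) (Y v (0 + p - int i) (Y u (-1 + int i) vac)))
      = sum (\<lambda>i::nat. sm ((-1) powi (p + int i) * binom p i) (Y v (0 + p - int i) (Y u (-1 + int i) vac))) {0}"
  proof (rule Sum_any.expand_superset)
    have "Y u (-1 + int i) vac = 0" if "i \<noteq> 0" for i
      using creation_nonneg[OF assms(1)] that by simp
    then show "{i. sm ((-1) powi (p + int i) * binom p i) (Y v (0 + p - int i) (Y u (-1 + int i) vac)) \<noteq> 0}
        \<subseteq> {0}"
      using mode_zero_right[OF assms(2)] by fastforce
  qed simp
  also have "\<dots> = sm ((-1) powi p) (Y v p u)"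
    using creation[OF assms(1)] by (simp add: binom_def)
  finally show ?thesis
    using B unfolding borcherds_def R1 by simp
qed

text \<open>By skew symmetry, \<open>v\<^sub>p u\<close> is determined by the \<open>u\<^sub>k v\<close> with \<open>k \<ge> p\<close>.\<close>
lemma mode_eq_if_nonneg_modes_eq:
  assumes "u \<in> V" "u' \<in> V" "v \<in> V" "\<And>k. k \<ge> 0 \<Longrightarrow> Y u k v = Y u' k v" "p \<ge> 0"
  shows "Y v p u = Y v p u'"
proof -
  have "- sm ((-1) powi p) (Y v p u) = - sm ((-1) powi p) (Y v p u')"
    using skew_symmetry[OF assms(1,3), of p] skew_symmetry[OF assms(2,3), of p] assms(4,5)
    by simp
  then have "sm ((-1) powi p) (Y v p u - Y v p u') = 0"
    by (simp add: scale_right_diff_distrib)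
  then show ?thesis by simp
qed

lemma annihilator_subalgebra:
  assumes w: "w \<in> V"
  shows "vertex_subalgebra sm Y vac V {x \<in> V. \<forall>n\<ge>0. Y x n w = 0}"
  unfolding vertex_subalgebra_def
proof (intro conjI ballI allI)
  show "subspace {x \<in> V. \<forall>n\<ge>0. Y x n w = 0}"
    by (rule subspaceI) (auto simp: zero_mem mode_zero_left add_mem mode_add_left scale_mem mode_scale_left w)
  show "vac \<in> {x \<in> V. \<forall>n\<ge>0. Y x n w = 0}"
    using vac_mem vac_mode w by auto
  fix u v p
  assume u: "u \<in> {x \<in> V. \<forall>n\<ge>0. Y x n w = 0}" and v: "v \<in> {x \<in> V. \<forall>n\<ge>0. Y x n w = 0}"
  have "Y (Y u p v) n w = 0" if n: "n \<ge> 0" for n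
  proof -
    \<comment> \<open>Borcherds with \<open>m = 0\<close>: both right-hand sums contain \<open>u_k w\<close> or \<open>v_k w\<close> with \<open>k \<ge> 0\<close>\<close>
    have B: "borcherds sm Y u v w 0 n p"
      using borcherds_identity u v w by auto
    have L: "(\<lambda>i::nat. sm (binom 0 i) (Y (Y u (p + int i) v) (0 + n - int i) w))
        = (\<lambda>i. if i = 0 then Y (Y u p v) n w else 0)"
      by (auto simp: binom_def gbinomial_0_left)
    have R: "(\<lambda>i::nat. sm ((-1) powi (int i) * binom p i) (Y u (0 + p - int i) (Y v (n + int i) w))) = (\<lambda>i. 0)"
      "(\<lambda>i::nat. sm ((-1) powi (p + int i) * binom p i) (Y v (n + p - int i) (Y u (0 + int i) w))) = (\<lambda>i. 0)"
      using u v n mode_zero_right by auto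
    show ?thesis
      using B unfolding borcherds_def L R by simp
  qed
  then show "Y u p v \<in> {x \<in> V. \<forall>n\<ge>0. Y x n w = 0}"
    using u v mode_closed by auto
qed auto

lemma mode_span_left:
  assumes "u \<in> span P" "P \<subseteq> V" "d \<in> V" "\<And>p. p \<in> P \<Longrightarrow> Y p n d \<in> span Q"
  shows "Y u n d \<in> span Q"
proof -
  have "u \<in> V \<and> Y u n d \<in> span Q"
    using assms(1)
  proof (induct rule: span_induct_alt)
    case base
    then show ?case by (simp add: zero_mem mode_zero_left assms span_zero)
  next
    case (step c x y)
    then have "x \<in> V" using assms(2) by auto
    then show ?case
      using step assms by (simp add: add_mem scale_mem mode_add_left mode_scale_left span_add span_scale)
  qed
  then show ?thesis by simp
qed

lemma mode_span_right:
  assumes "d \<in> span P" "P \<subseteq> V" "u \<in> V" "\<And>p. p \<in> P \<Longrightarrow> Y u n p \<in> span Q"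
  shows "Y u n d \<in> span Q"
proof -
  have "d \<in> V \<and> Y u n d \<in> span Q"
    using assms(1)
  proof (induct rule: span_induct_alt)
    case base
    then show ?case by (simp add: zero_mem mode_zero_right assms span_zero)
  next
    case (step c x y)
    then have "x \<in> V" using assms(2) by auto
    then show ?case
      using step assms by (simp add: add_mem scale_mem mode_add_right mode_scale_right span_add span_scale)
  qed
  then show ?thesis by simp
qed

lemma mode_span_bilinear:
  assumes "u \<in> span P" "d \<in> span Q" "P \<subseteq> V" "Q \<subseteq> V"
    and "\<And>p q. p \<in> P \<Longrightarrow> q \<in> Q \<Longrightarrow> Y p n q \<in> span R"
  shows "Y u n d \<in> span R"
proof (rule mode_span_left[OF assms(1,3)])
  show "d \<in> V"
    using assms(2,4) span_minimal[OF _ subspace] by blast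
  show "Y p n d \<in> span R" if "p \<in> P" for p
    using mode_span_right[OF assms(2,4)] assms(3,5) that by blast
qed

end

locale graded_vertex_alg = vertex_alg +
  fixes \<omega>
  assumes omega_mem: "\<omega> \<in> V"
begin

abbreviation wt where
  "wt n \<equiv> wt_space sm Y \<omega> V n"

lemma wt_subspace: "subspace (wt n)"
  by (rule subspaceI) (auto simp: wt_space_def zero_mem mode_zero_right omega_mem add_mem
      mode_add_right scale_mem mode_scale_right scale_right_distrib scale_scale mult.commute)

lemma span_wt_subset: "span (\<Union>n\<in>F. wt n) \<subseteq> V"
  by (rule span_minimal) (auto simp: wt_space_def subspace)

lemma L0_span_wt:
  assumes "z \<in> span (\<Union>n\<in>F. wt n)"
  shows "Y \<omega> 1 z \<in> span (\<Union>n\<in>F. wt n)"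
proof -
  have "z \<in> V \<and> Y \<omega> 1 z \<in> span (\<Union>n\<in>F. wt n)"
    using assms
  proof (induct rule: span_induct_alt)
    case base
    then show ?case by (simp add: zero_mem mode_zero_right omega_mem span_zero)
  next
    case (step c x y)
    then obtain n where n: "n \<in> F" "x \<in> wt n" by auto
    then have x: "x \<in> V" "Y \<omega> 1 x = sm (of_int n) x" by (auto simp: wt_space_def)
    have "Y \<omega> 1 (sm c x + y) = sm c (sm (of_int n) x) + Y \<omega> 1 y"
      using step x by (simp add: mode_add_right mode_scale_right scale_mem omega_mem)
    moreover have "sm c (sm (of_int n) x) \<in> span (\<Union>n\<in>F. wt n)"
      using n by (intro span_scale span_base) auto
    ultimately show ?case
      using step x by (simp add: add_mem scale_mem span_add)
  qed
  then show ?thesis by simp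
qed

lemma wt_inter_span_finite:
  assumes "finite F" "k \<notin> F" "z \<in> wt k" "z \<in> span (\<Union>n\<in>F. wt n)"
  shows "z = 0"
  using assms
proof (induct F arbitrary: z)
  case empty
  then show ?case by simp
next
  case (insert m F)
  obtain y z' where yz: "z = y + z'" "y \<in> span (wt m)" "z' \<in> span (\<Union>n\<in>F. wt n)"
    using insert.prems(3) unfolding UN_insert span_Un by blast
  have "y \<in> wt m"
    using yz(2) span_eq_iff[of "wt m"] wt_subspace by blast
  then have y: "y \<in> V" "Y \<omega> 1 y = sm (of_int m) y"
    by (auto simp: wt_space_def)
  have z: "z \<in> V" "Y \<omega> 1 z = sm (of_int k) z"
    using insert.prems(2) by (auto simp: wt_space_def)
  have "z' \<in> V"
    using yz(3) span_wt_subset by blast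
  \<comment> \<open>\<open>L(0) - m\<close> kills the \<open>wt m\<close>-component of \<open>z\<close> and acts on \<open>z\<close> as \<open>k - m\<close>\<close>
  then have "Y \<omega> 1 z - sm (of_int m) z = Y \<omega> 1 z' - sm (of_int m) z'"
    using yz(1) y by (simp add: mode_add_right omega_mem scale_right_distrib)
  then have eq: "sm (of_int k - of_int m) z = Y \<omega> 1 z' - sm (of_int m) z'"
    using z(2) by (simp add: scale_left_diff_distrib)
  have "sm (of_int k - of_int m) z \<in> span (\<Union>n\<in>F. wt n)"
    unfolding eq using L0_span_wt yz(3) by (intro span_diff span_scale) auto
  moreover have "sm (of_int k - of_int m) z \<in> wt k"
    using insert.prems(2) wt_subspace by (simp add: subspace_def)
  ultimately have "sm (of_int k - of_int m) z = 0"
    using insert.hyps(3) insert.prems(1) by blast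
  then show ?case
    using insert.prems(1) by simp
qed

lemma wt_inter_span_others:
  assumes "z \<in> wt k" "z \<in> span (\<Union>n\<in>{n. n \<noteq> k}. wt n)"
  shows "z = 0"
proof -
  have "\<exists>F. finite F \<and> k \<notin> F \<and> z \<in> span (\<Union>n\<in>F. wt n)"
    using assms(2)
  proof (induct rule: span_induct_alt)
    case base
    then show ?case by (intro exI[of _ "{}"]) (simp add: span_zero)
  next
    case (step c x y)
    then obtain F where F: "finite F" "k \<notin> F" "y \<in> span (\<Union>n\<in>F. wt n)" by auto
    from step obtain n where n: "n \<noteq> k" "x \<in> wt n" by auto
    have "span (\<Union>n\<in>F. wt n) \<subseteq> span (\<Union>n\<in>insert n F. wt n)"
      by (rule span_mono) auto
    with F(3) have "y \<in> span (\<Union>n\<in>insert n F. wt n)" by blast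
    moreover have "sm c x \<in> span (\<Union>n\<in>insert n F. wt n)"
      using n by (intro span_scale span_base) auto
    ultimately have "sm c x + y \<in> span (\<Union>n\<in>insert n F. wt n)"
      by (rule span_add[rotated])
    then show ?case using F n by (intro exI[of _ "insert n F"]) auto
  qed
  then show ?thesis
    using wt_inter_span_finite assms(1) by blast
qed


lemma semi_conformalD:
  assumes "\<omega>' \<in> semi_conformal sm Y vac \<omega> V"
  shows "\<omega>' \<in> V" and "Y \<omega>' 1 \<omega>' = sm 2 \<omega>'" and "\<And>k. k \<ge> 0 \<Longrightarrow> Y \<omega> k \<omega>' = Y \<omega>' k \<omega>'"
proof -
  obtain U' where U': "vertex_subalgebra sm Y vac V U'" "VOA sm Y vac \<omega>' U'"
      "\<And>n u. n \<ge> 0 \<Longrightarrow> u \<in> U' \<Longrightarrow> Y \<omega> n u = Y \<omega>' n u"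
    using assms unfolding semi_conformal_def by blast
  then have "\<omega>' \<in> U'" "Y \<omega>' 1 \<omega>' = sm 2 \<omega>'"
    by (auto simp: VOA_def)
  then show "\<omega>' \<in> V" "Y \<omega>' 1 \<omega>' = sm 2 \<omega>'" "\<And>k. k \<ge> 0 \<Longrightarrow> Y \<omega> k \<omega>' = Y \<omega>' k \<omega>'"
    using U' by (auto simp: vertex_subalgebra_def)
qed

lemma semi_conformal_complement_in_commutant:
  assumes "\<omega>' \<in> semi_conformal sm Y vac \<omega> V"
  shows "\<omega> - \<omega>' \<in> commutant Y V (generated sm Y vac V {\<omega>'})"
proof -
  note \<omega>' = semi_conformalD[OF assms]
  have "Y \<omega>' p \<omega> = Y \<omega>' p \<omega>'" if "p \<ge> 0" for p
    using mode_eq_if_nonneg_modes_eq[OF omega_mem \<omega>'(1) \<omega>'(1) \<omega>'(3) that] .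
  then have "\<omega>' \<in> {x \<in> V. \<forall>n\<ge>0. Y x n (\<omega> - \<omega>') = 0}"
    using \<omega>'(1) mode_diff_right[OF \<omega>'(1) omega_mem \<omega>'(1)] by auto
  then have "generated sm Y vac V {\<omega>'} \<subseteq> {x \<in> V. \<forall>n\<ge>0. Y x n (\<omega> - \<omega>') = 0}"
    using annihilator_subalgebra[OF diff_mem[OF omega_mem \<omega>'(1)]] by (auto simp: generated_def)
  then show ?thesis
    using diff_mem[OF omega_mem \<omega>'(1)] by (auto simp: commutant_def)
qed

lemma semi_conformal_complement_L0:
  assumes "\<omega>' \<in> semi_conformal sm Y vac \<omega> V" and "Y \<omega> 1 \<omega> = sm 2 \<omega>"
  shows "Y (\<omega> - \<omega>') 1 (\<omega> - \<omega>') = sm 2 (\<omega> - \<omega>')"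
proof -
  note \<omega>' = semi_conformalD[OF assms(1)]
  have "Y \<omega>' 1 (\<omega> - \<omega>') = 0"
    using semi_conformal_complement_in_commutant[OF assms(1)] generated_base[of "{\<omega>'}"]
    by (auto simp: commutant_def)
  then have "Y (\<omega> - \<omega>') 1 (\<omega> - \<omega>') = Y \<omega> 1 \<omega> - Y \<omega> 1 \<omega>'"
    using mode_diff_left[OF omega_mem \<omega>'(1) diff_mem[OF omega_mem \<omega>'(1)]]
      mode_diff_right[OF omega_mem omega_mem \<omega>'(1)] by simp
  also have "\<dots> = sm 2 (\<omega> - \<omega>')"
    using assms(2) \<omega>'(2) \<omega>'(3)[of 1] by (simp add: scale_right_diff_distrib)
  finally show ?thesis .
qed

end

lemma (in vector_space) dim_pos_if_finitely_spanned:
  assumes "finite B" "S \<subseteq> span B" "x \<in> S" "x \<noteq> 0"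
  shows "dim S > 0"
proof -
  obtain C where C: "C \<subseteq> S" "independent C" "S \<subseteq> span C" "card C = dim S"
    by (rule basis_exists)
  have "finite C"
    using independent_span_bound[OF assms(1) C(2)] C(1) assms(2) by blast
  moreover have "C \<noteq> {}"
    using C(3) assms(3,4) by auto
  ultimately show ?thesis
    using C(4) card_gt_0_iff by metis
qed

text \<open>The content of an isomorphism \<open>U \<otimes> D \<cong> V\<close> used below: \<open>\<omega>\<close> is the image of \<open>\<omega>\<^sub>1 \<otimes> \<one> + \<one> \<otimes> \<omega>\<^sub>2\<close>, the products \<open>u\<^sub>-\<^sub>1d\<close> span
  \<open>V\<close>, and modes of products are computed as in the tensor product VOA.\<close>
locale tensor_decomposition = vertex_alg +
  fixes \<omega> U D \<omega>\<^sub>1 \<omega>\<^sub>2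
  assumes VOA_left: "VOA sm Y vac \<omega>\<^sub>1 U"
    and VOA_right: "VOA sm Y vac \<omega>\<^sub>2 D"
    and left_subset: "U \<subseteq> V"
    and right_subset: "D \<subseteq> V"
    and conformal_vector: "Y \<omega>\<^sub>1 (-1) vac + Y vac (-1) \<omega>\<^sub>2 = \<omega>"
    and products_span: "V \<subseteq> module.span sm {Y u (-1) d | u d. u \<in> U \<and> d \<in> D}"
    and product_modes: "\<And>a b a' b' n. a \<in> U \<Longrightarrow> b \<in> D \<Longrightarrow> a' \<in> U \<Longrightarrow> b' \<in> D \<Longrightarrow>
      Y (Y a (-1) b) n (Y a' (-1) b') = Sum_any (\<lambda>i. Y (Y a i a') (-1) (Y b (n - 1 - i) b'))"
begin

sublocale left: vertex_alg sm Y vac U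
  using VOA_left by unfold_locales (simp add: VOA_def)

sublocale right: vertex_alg sm Y vac D
  using VOA_right by unfold_locales (simp add: VOA_def)

lemma left_conformal_in: "\<omega>\<^sub>1 \<in> U"
  using VOA_left by (simp add: VOA_def)

lemma right_conformal_in: "\<omega>\<^sub>2 \<in> D"
  using VOA_right by (simp add: VOA_def)

lemma left_conformal_mem: "\<omega>\<^sub>1 \<in> V"
  using left_conformal_in left_subset by blast

lemma right_conformal_mem: "\<omega>\<^sub>2 \<in> V"
  using right_conformal_in right_subset by blast

lemma conformal_vector_sum: "\<omega> = \<omega>\<^sub>1 + \<omega>\<^sub>2"
  using conformal_vector creation[OF left_conformal_mem] vac_mode[OF right_conformal_mem, of "-1"]
  by simp

sublocale graded_vertex_alg sm Y vac V \<omega>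
  by unfold_locales (simp add: conformal_vector_sum add_mem left_conformal_mem right_conformal_mem)

lemma left_mem: "u \<in> U \<Longrightarrow> u \<in> V"
  using left_subset by blast

lemma right_mem: "d \<in> D \<Longrightarrow> d \<in> V"
  using right_subset by blast

lemma right_L0_on_left_eq_0:
  assumes u: "u \<in> U"
  shows "Y \<omega>\<^sub>2 1 u = 0"
proof -
  have "Y (Y vac (-1) \<omega>\<^sub>2) 1 (Y u (-1) vac) = Sum_any (\<lambda>i. Y (Y vac i u) (-1) (Y \<omega>\<^sub>2 (- i) vac))"
    using product_modes[OF left.vac_mem right_conformal_in u right.vac_mem, of 1] by simp
  also have "\<dots> = 0"
  proof -
    have "Y (Y vac i u) (-1) (Y \<omega>\<^sub>2 (- i) vac) = 0" for i
    proof (cases "i = -1")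
      case True
      then show ?thesis
        using vac_mode[OF left_mem[OF u]] creation_nonneg[OF right_conformal_mem, of 1]
          mode_zero_right[OF left_mem[OF u]] by simp
    next
      case False
      then show ?thesis
        using vac_mode[OF left_mem[OF u]] mode_zero_left mode_closed[OF right_conformal_mem vac_mem]
        by simp
    qed
    then show ?thesis by simp
  qed
  finally show ?thesis
    using vac_mode[OF right_conformal_mem] creation[OF left_mem[OF u]] by simp
qed


lemma left_L0_on_right_eq_0:
  assumes d: "d \<in> D"
  shows "Y \<omega>\<^sub>1 1 d = 0"
proof -
  have "Y (Y \<omega>\<^sub>1 (-1) vac) 1 (Y vac (-1) d) = Sum_any (\<lambda>i. Y (Y \<omega>\<^sub>1 i vac) (-1) (Y vac (- i) d))"
    using product_modes[OF left_conformal_in right.vac_mem left.vac_mem d, of 1] by simp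
  also have "\<dots> = 0"
  proof -
    have "Y (Y \<omega>\<^sub>1 i vac) (-1) (Y vac (- i) d) = 0" for i
    proof (cases "i \<ge> 0")
      case True
      then show ?thesis
        using creation_nonneg[OF left_conformal_mem] mode_zero_left mode_closed[OF vac_mem right_mem[OF d]]
        by simp
    next
      case False
      then show ?thesis
        using vac_mode[OF right_mem[OF d]] mode_zero_right mode_closed[OF left_conformal_mem vac_mem]
        by simp
    qed
    then show ?thesis by simp
  qed
  finally show ?thesis
    using vac_mode[OF right_mem[OF d]] creation[OF left_conformal_mem] by simp
qed

lemma left_L0_product:
  assumes u: "u \<in> U" and d: "d \<in> D"
  shows "Y \<omega>\<^sub>1 1 (Y u (-1) d) = Y (Y \<omega>\<^sub>1 1 u) (-1) d"
proof -
  have "Y (Y \<omega>\<^sub>1 (-1) vac) 1 (Y u (-1) d) = Sum_any (\<lambda>i. Y (Y \<omega>\<^sub>1 i u) (-1) (Y vac (- i) d))"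
    using product_modes[OF left_conformal_in right.vac_mem u d, of 1] by simp
  also have "\<dots> = Y (Y \<omega>\<^sub>1 1 u) (-1) (Y vac (- 1) d)"
    by (rule Sum_any_single) (use vac_mode[OF right_mem[OF d]] mode_zero_right
        mode_closed[OF left_conformal_mem left_mem[OF u]] in auto)
  finally show ?thesis
    using vac_mode[OF right_mem[OF d]] creation[OF left_conformal_mem] by simp
qed

lemma right_L0_product:
  assumes u: "u \<in> U" and d: "d \<in> D"
  shows "Y \<omega>\<^sub>2 1 (Y u (-1) d) = Y u (-1) (Y \<omega>\<^sub>2 1 d)"
proof -
  have "Y (Y vac (-1) \<omega>\<^sub>2) 1 (Y u (-1) d) = Sum_any (\<lambda>i. Y (Y vac i u) (-1) (Y \<omega>\<^sub>2 (- i) d))"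
    using product_modes[OF left.vac_mem right_conformal_in u d, of 1] by simp
  also have "\<dots> = Y (Y vac (-1) u) (-1) (Y \<omega>\<^sub>2 1 d)"
    by (subst Sum_any_single[where j = "-1"]) (use vac_mode[OF left_mem[OF u]] mode_zero_left
        mode_closed[OF right_conformal_mem right_mem[OF d]] in auto)
  finally show ?thesis
    using vac_mode[OF left_mem[OF u]] vac_mode[OF right_conformal_mem] by simp
qed

lemma L0_left: "u \<in> U \<Longrightarrow> Y \<omega> 1 u = Y \<omega>\<^sub>1 1 u"
  using conformal_vector_sum mode_add_left[OF left_conformal_mem right_conformal_mem left_mem]
    right_L0_on_left_eq_0 by simp

lemma L0_right: "d \<in> D \<Longrightarrow> Y \<omega> 1 d = Y \<omega>\<^sub>2 1 d"
  using conformal_vector_sum mode_add_left[OF left_conformal_mem right_conformal_mem right_mem]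
    left_L0_on_right_eq_0 by simp

lemma left_wt_spaces_span: "U \<subseteq> span (\<Union>a. U \<inter> wt a)"
proof -
  have "U \<subseteq> span (\<Union>n. wt_space sm Y \<omega>\<^sub>1 U n)"
    using VOA_left by (simp add: VOA_def)
  also have "\<dots> \<subseteq> span (\<Union>a. U \<inter> wt a)"
    by (rule span_mono) (auto simp: wt_space_def L0_left left_mem)
  finally show ?thesis .
qed

lemma right_wt_spaces_span: "D \<subseteq> span (\<Union>b. D \<inter> wt b)"
proof -
  have "D \<subseteq> span (\<Union>n. wt_space sm Y \<omega>\<^sub>2 D n)"
    using VOA_right by (simp add: VOA_def)
  also have "\<dots> \<subseteq> span (\<Union>b. D \<inter> wt b)"
    by (rule span_mono) (auto simp: wt_space_def L0_right right_mem)
  finally show ?thesis .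
qed

lemma product_wt:
  assumes u: "u \<in> U \<inter> wt a" and d: "d \<in> D \<inter> wt b"
  shows "Y u (-1) d \<in> wt (a + b)"
proof -
  have uV: "u \<in> V" and dV: "d \<in> V"
    using u d left_mem right_mem by auto
  have Lu: "Y \<omega>\<^sub>1 1 u = sm (of_int a) u" and Ld: "Y \<omega>\<^sub>2 1 d = sm (of_int b) d"
    using u d L0_left L0_right by (auto simp: wt_space_def)
  have "Y \<omega> 1 (Y u (-1) d) = Y \<omega>\<^sub>1 1 (Y u (-1) d) + Y \<omega>\<^sub>2 1 (Y u (-1) d)"
    using conformal_vector_sum mode_add_left[OF left_conformal_mem right_conformal_mem mode_closed[OF uV dV]]
    by simp
  also have "\<dots> = sm (of_int a) (Y u (-1) d) + sm (of_int b) (Y u (-1) d)"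
    using left_L0_product right_L0_product u d Lu Ld mode_scale_left[OF uV dV] mode_scale_right[OF uV dV]
    by auto
  also have "\<dots> = sm (of_int (a + b)) (Y u (-1) d)"
    by (simp add: scale_left_distrib)
  finally show ?thesis
    using mode_closed[OF uV dV] by (simp add: wt_space_def)
qed


lemma homogeneous_products_span:
  "V \<subseteq> span {Y u (-1) d | u d. \<exists>a b. u \<in> U \<inter> wt a \<and> d \<in> D \<inter> wt b}"
    (is "_ \<subseteq> span ?H")
proof -
  have "Y u (-1) d \<in> span ?H" if "u \<in> U" "d \<in> D" for u d
  proof (rule mode_span_bilinear)
    show "u \<in> span (\<Union>a. U \<inter> wt a)" "d \<in> span (\<Union>b. D \<inter> wt b)"
      using that left_wt_spaces_span right_wt_spaces_span by auto
    show "(\<Union>a. U \<inter> wt a) \<subseteq> V" "(\<Union>b. D \<inter> wt b) \<subseteq> V"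
      using left_subset right_subset by auto
    show "Y p (-1) q \<in> span ?H" if "p \<in> (\<Union>a. U \<inter> wt a)" "q \<in> (\<Union>b. D \<inter> wt b)" for p q
      using that by (intro span_base) blast
  qed
  then have "span {Y u (-1) d | u d. u \<in> U \<and> d \<in> D} \<subseteq> span ?H"
    by (intro span_minimal) auto
  then show ?thesis
    using products_span by blast
qed

lemma wt_subset_span_products:
  "wt k \<subseteq> span {Y u (-1) d | u d. \<exists>a b. a + b = k \<and> u \<in> U \<inter> wt a \<and> d \<in> D \<inter> wt b}"
    (is "_ \<subseteq> span ?Hk")
proof
  define Ho where "Ho = {Y u (-1) d | u d. \<exists>a b. a + b \<noteq> k \<and> u \<in> U \<inter> wt a \<and> d \<in> D \<inter> wt b}"
  fix x
  assume x: "x \<in> wt k"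
  have split: "{Y u (-1) d | u d. \<exists>a b. u \<in> U \<inter> wt a \<and> d \<in> D \<inter> wt b} \<subseteq> ?Hk \<union> Ho"
    unfolding Ho_def by (auto, metis)
  have "x \<in> V"
    using x by (simp add: wt_space_def)
  then have "x \<in> span (?Hk \<union> Ho)"
    using subsetD[OF span_mono[OF split] subsetD[OF homogeneous_products_span]] by blast
  then obtain y z where yz: "x = y + z" "y \<in> span ?Hk" "z \<in> span Ho"
    unfolding span_Un by blast
  have "?Hk \<subseteq> wt k"
    using product_wt by auto
  then have "y \<in> wt k"
    using yz(2) span_minimal[OF _ wt_subspace] by blast
  then have "z \<in> wt k"
    using yz(1) x subspace_diff[OF wt_subspace x] by (metis add_diff_cancel_left')
  moreover have "Ho \<subseteq> (\<Union>n\<in>{n. n \<noteq> k}. wt n)"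
    unfolding Ho_def using product_wt by auto
  then have "z \<in> span (\<Union>n\<in>{n. n \<noteq> k}. wt n)"
    using yz(3) span_mono by blast
  ultimately have "z = 0"
    using wt_inter_span_others by blast
  then show "x \<in> span ?Hk"
    using yz by simp
qed

lemma wt1_subset_span_left_right:
  assumes neg: "\<And>n. n < 0 \<Longrightarrow> wt n = {0}" and wt0: "wt 0 = span {vac}"
  shows "wt 1 \<subseteq> span (U \<inter> wt 1 \<union> D \<inter> wt 1)"
proof -
  have "Y u (-1) d \<in> span (U \<inter> wt 1 \<union> D \<inter> wt 1)"
    if ab: "a + b = 1" and u: "u \<in> U \<inter> wt a" and d: "d \<in> D \<inter> wt b" for u d a b
  proof -
    have uV: "u \<in> V" and dV: "d \<in> V"
      using u d left_mem right_mem by auto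
    consider "a < 0" | "b < 0" | "a = 0" "b = 1" | "a = 1" "b = 0"
      using ab by linarith
    then show ?thesis
    proof cases
      case 1
      then show ?thesis using u neg mode_zero_left[OF dV] span_zero by auto
    next
      case 2
      then show ?thesis using d neg mode_zero_right[OF uV] span_zero by auto
    next
      case 3
      then obtain c where "u = sm c vac"
        using u wt0 span_singleton by auto
      then show ?thesis
        using 3 d mode_scale_left[OF vac_mem dV] vac_mode[OF dV] by (auto intro: span_scale span_base)
    next
      case 4
      then obtain c where "d = sm c vac"
        using d wt0 span_singleton by auto
      then show ?thesis
        using 4 u mode_scale_right[OF uV vac_mem] creation[OF uV] by (auto intro: span_scale span_base)
    qed
  qed
  then have "span {Y u (-1) d | u d. \<exists>a b. a + b = 1 \<and> u \<in> U \<inter> wt a \<and> d \<in> D \<inter> wt b}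
      \<subseteq> span (U \<inter> wt 1 \<union> D \<inter> wt 1)"
    by (intro span_minimal) auto
  then show ?thesis
    using wt_subset_span_products by blast
qed

lemma subset_right_if_left_wt1_trivial:
  assumes "\<And>n. n < 0 \<Longrightarrow> wt n = {0}" "wt 0 = span {vac}"
    and "V = generated sm Y vac V (wt 1)" "U \<inter> wt 1 \<subseteq> {0}"
  shows "V \<subseteq> D"
proof -
  have "span (U \<inter> wt 1 \<union> D \<inter> wt 1) \<subseteq> D"
    using assms(4) right.zero_mem by (intro span_minimal right.subspace) auto
  then have "wt 1 \<subseteq> D"
    using wt1_subset_span_left_right[OF assms(1,2)] by blast
  then show ?thesis
    using generated_subset[OF right.vertex_algebra right_subset] assms(3) by blast
qed

lemma subset_left_if_right_wt1_trivial:
  assumes "\<And>n. n < 0 \<Longrightarrow> wt n = {0}" "wt 0 = span {vac}"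
    and "V = generated sm Y vac V (wt 1)" "D \<inter> wt 1 \<subseteq> {0}"
  shows "V \<subseteq> U"
proof -
  have "span (U \<inter> wt 1 \<union> D \<inter> wt 1) \<subseteq> U"
    using assms(4) left.zero_mem by (intro span_minimal left.subspace) auto
  then have "wt 1 \<subseteq> U"
    using wt1_subset_span_left_right[OF assms(1,2)] by blast
  then show ?thesis
    using generated_subset[OF left.vertex_algebra left_subset] assms(3) by blast
qed


lemma left_wt1_nonzero:
  assumes "\<And>n. n < 0 \<Longrightarrow> wt n = {0}" "wt 0 = span {vac}" "V = generated sm Y vac V (wt 1)"
    and "x \<in> V" "Y x 1 x \<noteq> 0" "\<forall>d\<in>D. Y x 1 d = 0"
  shows "\<exists>u \<in> U \<inter> wt 1. u \<noteq> 0"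
  using subset_right_if_left_wt1_trivial[OF assms(1-3)] assms(4-6) by blast

lemma right_wt1_nonzero:
  assumes "\<And>n. n < 0 \<Longrightarrow> wt n = {0}" "wt 0 = span {vac}" "V = generated sm Y vac V (wt 1)"
    and "x \<in> V" "Y x 1 x \<noteq> 0" "\<forall>u\<in>U. Y x 1 u = 0"
  shows "\<exists>d \<in> D \<inter> wt 1. d \<noteq> 0"
  using subset_left_if_right_wt1_trivial[OF assms(1-3)] assms(4-6) by blast

end

lemma (in vertex_alg) tensor_decomposition_if_tensor_iso:
  assumes "tensor_iso sm Y vac \<omega> V U D" "U \<subseteq> V" "D \<subseteq> V"
  obtains \<omega>\<^sub>1 \<omega>\<^sub>2 where "tensor_decomposition sm Y vac V \<omega> U D \<omega>\<^sub>1 \<omega>\<^sub>2"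
proof -
  have "\<exists>\<omega>\<^sub>1 \<omega>\<^sub>2. VOA sm Y vac \<omega>\<^sub>1 U \<and> VOA sm Y vac \<omega>\<^sub>2 D \<and> Y \<omega>\<^sub>1 (-1) vac + Y vac (-1) \<omega>\<^sub>2 = \<omega>"
    using assms(1) by (simp add: tensor_iso_def)
  then obtain \<omega>\<^sub>1 \<omega>\<^sub>2 where conformal: "VOA sm Y vac \<omega>\<^sub>1 U" "VOA sm Y vac \<omega>\<^sub>2 D"
      "Y \<omega>\<^sub>1 (-1) vac + Y vac (-1) \<omega>\<^sub>2 = \<omega>"
    by blast
  have "V \<subseteq> span {Y u (-1) d | u d. u \<in> U \<and> d \<in> D}"
    and "\<forall>a\<in>U. \<forall>b\<in>D. \<forall>a'\<in>U. \<forall>b'\<in>D. \<forall>n.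
      Y (Y a (-1) b) n (Y a' (-1) b') = Sum_any (\<lambda>i. Y (Y a i a') (-1) (Y b (n - 1 - i) b'))"
    using assms(1) by (simp_all add: tensor_iso_def)
  with conformal assms(2,3) have "tensor_decomposition sm Y vac V \<omega> U D \<omega>\<^sub>1 \<omega>\<^sub>2"
    by unfold_locales (simp_all add: vertex_algebra)
  then show ?thesis ..
qed

theorem lemma5p3:
  fixes sm :: "complex \<Rightarrow> 'v::ab_group_add \<Rightarrow> 'v"
    and Y :: "'v \<Rightarrow> int \<Rightarrow> 'v \<Rightarrow> 'v"
    and vac \<omega> \<omega>' :: 'v
    and V :: "'v set"
  assumes "nondeg_simple_CFT sm Y vac \<omega> V"
    and "V = generated sm Y vac V (wt_space sm Y \<omega> V 1)"
    and "condition_T sm Y vac \<omega> V"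
    and "\<omega>' \<in> semi_conformal sm Y vac \<omega> V"
    and "\<omega>' \<noteq> 0" and "\<omega>' \<noteq> \<omega>"
  shows "vector_space.dim sm (commutant Y V (commutant Y V (generated sm Y vac V {\<omega>'}))
            \<inter> wt_space sm Y \<omega> V 1) > 0
     \<and> vector_space.dim sm (commutant Y V (generated sm Y vac V {\<omega>'})
            \<inter> wt_space sm Y \<omega> V 1) > 0"
proof -
  define D where "D = commutant Y V (generated sm Y vac V {\<omega>'})"
  define U where "U = commutant Y V D"
  have VOA: "VOA sm Y vac \<omega> V" and neg: "\<And>n. n < 0 \<Longrightarrow> wt_space sm Y \<omega> V n = {0}"
    and wt0: "wt_space sm Y \<omega> V 0 = module.span sm {vac}"
    using assms(1) by (auto simp: nondeg_simple_CFT_def simple_VOA_def)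
  then interpret graded_vertex_alg sm Y vac V \<omega>
    by unfold_locales (auto simp: VOA_def)
  have "tensor_iso sm Y vac \<omega> V U D"
    using assms(3,4) by (simp add: condition_T_def U_def D_def)
  moreover have "U \<subseteq> V" "D \<subseteq> V"
    by (auto simp: U_def D_def commutant_def)
  ultimately obtain \<omega>\<^sub>1 \<omega>\<^sub>2 where "tensor_decomposition sm Y vac V \<omega> U D \<omega>\<^sub>1 \<omega>\<^sub>2"
    by (rule tensor_decomposition_if_tensor_iso)
  then interpret T: tensor_decomposition sm Y vac V \<omega> U D \<omega>\<^sub>1 \<omega>\<^sub>2 .
  note \<omega>' = semi_conformalD[OF assms(4)]
  have \<omega>D: "\<omega> - \<omega>' \<in> D"
    unfolding D_def by (rule semi_conformal_complement_in_commutant[OF assms(4)])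
  have "\<exists>u \<in> U \<inter> wt_space sm Y \<omega> V 1. u \<noteq> 0"
    using T.left_wt1_nonzero[OF neg wt0 assms(2) \<omega>'(1)] \<omega>'(2) assms(5) generated_base[of "{\<omega>'}"]
    by (auto simp: D_def commutant_def)
  moreover have "\<exists>d \<in> D \<inter> wt_space sm Y \<omega> V 1. d \<noteq> 0"
    using T.right_wt1_nonzero[OF neg wt0 assms(2) diff_mem[OF omega_mem \<omega>'(1)]] \<omega>D assms(6)
      semi_conformal_complement_L0[OF assms(4)] VOA by (auto simp: U_def commutant_def VOA_def)
  moreover have "\<exists>B. finite B \<and> wt_space sm Y \<omega> V 1 \<subseteq> span B"
    using VOA by (simp add: VOA_def)
  ultimately show ?thesis
    using dim_pos_if_finitely_spanned unfolding U_def D_def by (meson Int_lower2 subset_trans)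
qed

end
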